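(* There exists $r_0>0$ such that for every $0\le r\le r_0$, \[ F(\beta)=\int_0^\beta (r^2+2\sin^2y)^{1/2}\Bigl(\frac34-\sin^2y\Bigr)dy\ \ge\ 0\qquad\text{for all }\beta\ge0. \] Moreover, if $0<r\le r_0$, then $F(\beta)=0$ (for $\beta\ge0$) if and only if $\beta=0$. *)

theory Defs
  imports "HOL-Analysis.Analysis"
begin

definition F :: "real \<Rightarrow> real \<Rightarrow> real" where
  "F r \<beta> = integral {0..\<beta>} (\<lambda>y. sqrt (r\<^sup>2 + 2 * (sin y)\<^sup>2) * (3/4 - (sin y)\<^sup>2))"

end

theory Submission
  imports Defs
begin

text \<open>Write \<open>t = sin\<^sup>2 y\<close>. The factor \<open>3/4 - t\<close> changes sign at \<open>t = 3/4\<close>, and there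
  \<open>sqrt (r\<^sup>2 + 2t)\<close> agrees with \<open>c sqrt t\<close>, \<open>c = sqrt ((r\<^sup>2 + 3/2) * 4/3)\<close>; on each side of
  \<open>3/4\<close> the two square roots are ordered so that the integrand dominates
  \<open>c \<bar>sin y\<bar> (3/4 - sin\<^sup>2 y)\<close>. On \<open>[0, pi]\<close> this minorant has the explicit primitive
  \<open>c (cos y / 4 - cos\<^sup>3 y / 3)\<close>, whose increment from \<open>0\<close> is
  \<open>c (1 - cos \<beta>) (cos \<beta> + 1/2)\<^sup>2 / 3 \<ge> 0\<close>. The integrand is \<open>pi\<close>-periodic, so
  \<open>F r (\<beta> + n pi) = n F r pi + F r \<beta>\<close> reduces everything to \<open>\<beta> \<in> [0, pi]\<close>. For \<open>r > 0\<close>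
  the comparison is strict at \<open>y = 0\<close>, which gives \<open>F r \<beta> > 0\<close> for \<open>\<beta> > 0\<close>.
  None of this needs \<open>r\<close> to be small, so any \<open>r0 > 0\<close> will do.\<close>

definition F_integrand :: "real \<Rightarrow> real \<Rightarrow> real" where
  "F_integrand r y = sqrt (r\<^sup>2 + 2 * (sin y)\<^sup>2) * (3/4 - (sin y)\<^sup>2)"

definition F_minorant :: "real \<Rightarrow> real \<Rightarrow> real" where
  "F_minorant r y = sqrt ((r\<^sup>2 + 3/2) * (4/3) * (sin y)\<^sup>2) * (3/4 - (sin y)\<^sup>2)"

lemma F_eq_integral_F_integrand: "F r \<beta> = integral {0..\<beta>} (F_integrand r)"
  unfolding F_def F_integrand_def by simp

lemma continuous_on_F_integrand: "continuous_on S (F_integrand r)"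
  unfolding F_integrand_def by (intro continuous_intros)

lemma continuous_on_F_minorant: "continuous_on S (F_minorant r)"
  unfolding F_minorant_def by (intro continuous_intros)

lemma F_integrand_integrable: "F_integrand r integrable_on {a..b}"
  by (rule integrable_continuous_interval[OF continuous_on_F_integrand])

lemma F_minorant_integrable: "F_minorant r integrable_on {a..b}"
  by (rule integrable_continuous_interval[OF continuous_on_F_minorant])

lemma sqrt_chord_mult_sign_le:
  fixes r s t :: real
  assumes "0 \<le> t" "0 < s"
  shows "sqrt ((r\<^sup>2 + 2 * s) / s * t) * (s - t) \<le> sqrt (r\<^sup>2 + 2 * t) * (s - t)"
proof -
  have diff: "(r\<^sup>2 + 2 * s) / s * t - (r\<^sup>2 + 2 * t) = r\<^sup>2 * (t - s) / s"
    using assms(2) by (simp add: field_simps)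
  show ?thesis
  proof (cases "t \<le> s")
    case True
    have "r\<^sup>2 * (t - s) / s \<le> 0"
      using True assms(2) by (intro divide_nonpos_pos mult_nonneg_nonpos) auto
    then have "sqrt ((r\<^sup>2 + 2 * s) / s * t) \<le> sqrt (r\<^sup>2 + 2 * t)"
      using diff by (intro real_sqrt_le_mono) linarith
    then show ?thesis using True by (intro mult_right_mono) auto
  next
    case False
    have "0 \<le> r\<^sup>2 * (t - s) / s"
      using False assms(2) by (intro divide_nonneg_pos mult_nonneg_nonneg) auto
    then have "sqrt (r\<^sup>2 + 2 * t) \<le> sqrt ((r\<^sup>2 + 2 * s) / s * t)"
      using diff by (intro real_sqrt_le_mono) linarith
    then show ?thesis using False by (intro mult_right_mono_neg) auto
  qed
qed

lemma F_minorant_le_F_integrand: "F_minorant r y \<le> F_integrand r y"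
proof -
  have "(r\<^sup>2 + 3/2) * (4/3) = (r\<^sup>2 + 2 * (3/4)) / (3/4 :: real)" by simp
  then show ?thesis
    unfolding F_minorant_def F_integrand_def
    using sqrt_chord_mult_sign_le[of "(sin y)\<^sup>2" "3/4" r] by simp
qed

definition F_primitive :: "real \<Rightarrow> real" where
  "F_primitive y = cos y / 4 - (cos y)^3 / 3"

lemma F_primitive_has_real_derivative:
  "(F_primitive has_real_derivative sin y * (3/4 - (sin y)\<^sup>2)) (at y within S)"
proof -
  have "(F_primitive has_real_derivative - sin y / 4 + (cos y)\<^sup>2 * sin y) (at y within S)"
    unfolding F_primitive_def by (auto intro!: derivative_eq_intros simp: power2_eq_square)
  moreover have "- sin y / 4 + (cos y)\<^sup>2 * sin y = sin y * (3/4 - (sin y)\<^sup>2)"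
    by (simp add: cos_squared_eq algebra_simps)
  ultimately show ?thesis by simp
qed

lemma F_primitive_increment_nonneg: "0 \<le> F_primitive \<beta> - F_primitive 0"
proof -
  have "F_primitive \<beta> - F_primitive 0 = (1 - cos \<beta>) * (cos \<beta> + 1/2)\<^sup>2 / 3"
    by (simp add: F_primitive_def power2_eq_square power3_eq_cube field_simps)
  moreover have "0 \<le> (1 - cos \<beta>) * (cos \<beta> + 1/2)\<^sup>2 / 3" by simp
  ultimately show ?thesis by linarith
qed

lemma integral_F_minorant:
  assumes "0 \<le> \<beta>" "\<beta> \<le> pi"
  shows "integral {0..\<beta>} (F_minorant r)
           = sqrt ((r\<^sup>2 + 3/2) * (4/3)) * (F_primitive \<beta> - F_primitive 0)"
proof -
  define c where "c = sqrt ((r\<^sup>2 + 3/2) * (4/3))"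
  have minorant_eq: "F_minorant r y = c * (sin y * (3/4 - (sin y)\<^sup>2))" if "y \<in> {0..\<beta>}" for y
  proof -
    have "0 \<le> sin y" using that assms by (intro sin_ge_zero) auto
    then show ?thesis
      unfolding F_minorant_def c_def real_sqrt_mult real_sqrt_abs by simp
  qed
  have "((\<lambda>y. sin y * (3/4 - (sin y)\<^sup>2)) has_integral F_primitive \<beta> - F_primitive 0) {0..\<beta>}"
    using assms by (intro fundamental_theorem_of_calculus)
      (auto simp: has_real_derivative_iff_has_vector_derivative[symmetric]
            intro: F_primitive_has_real_derivative)
  then have "((\<lambda>y. c * (sin y * (3/4 - (sin y)\<^sup>2)))
               has_integral c * (F_primitive \<beta> - F_primitive 0)) {0..\<beta>}"
    by (rule has_integral_mult_right)
  then have "(F_minorant r has_integral c * (F_primitive \<beta> - F_primitive 0)) {0..\<beta>}"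
    by (rule has_integral_eq[rotated]) (simp add: minorant_eq)
  then show ?thesis unfolding c_def by (rule integral_unique)
qed

lemma F_nonneg_upto_pi:
  assumes "0 \<le> \<beta>" "\<beta> \<le> pi"
  shows "0 \<le> F r \<beta>"
proof -
  have "integral {0..\<beta>} (F_minorant r) \<le> F r \<beta>"
    unfolding F_eq_integral_F_integrand
    by (intro integral_le F_minorant_integrable F_integrand_integrable F_minorant_le_F_integrand)
  moreover have "0 \<le> integral {0..\<beta>} (F_minorant r)"
    using integral_F_minorant[OF assms] F_primitive_increment_nonneg by simp
  ultimately show ?thesis by linarith
qed

lemma F_pos_upto_pi:
  assumes "0 < r" "0 < \<beta>" "\<beta> \<le> pi"
  shows "0 < F r \<beta>"
proof -
  define d where "d y = F_integrand r y - F_minorant r y" for y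
  have d_integrable: "d integrable_on {0..\<beta>}"
    unfolding d_def[abs_def] by (intro integrable_diff F_integrand_integrable F_minorant_integrable)
  have F_split: "F r \<beta> = integral {0..\<beta>} d + integral {0..\<beta>} (F_minorant r)"
    unfolding d_def F_eq_integral_F_integrand
    using integral_diff[OF F_integrand_integrable F_minorant_integrable] by simp
  have "0 \<le> integral {0..\<beta>} (F_minorant r)"
    using integral_F_minorant[of \<beta>] assms F_primitive_increment_nonneg by simp
  moreover have "integral {0..\<beta>} d \<noteq> 0"
  proof
    assume "integral {0..\<beta>} d = 0"
    then have "(d has_integral 0) (cbox 0 \<beta>)"
      using integrable_integral[OF d_integrable] by simp
    then have "d 0 = 0"
      using assms(2)
      by (intro has_integral_0_cbox_imp_0[of 0 \<beta> d])
        (auto simp: d_def F_minorant_le_F_integrand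
              intro!: continuous_on_diff continuous_on_F_integrand continuous_on_F_minorant)
    moreover have "d 0 = 3/4 * r"
      using assms(1) by (simp add: d_def F_integrand_def F_minorant_def)
    ultimately show False using assms(1) by simp
  qed
  moreover have "0 \<le> integral {0..\<beta>} d"
    using d_integrable by (intro integral_nonneg) (auto simp: d_def F_minorant_le_F_integrand)
  ultimately show ?thesis using F_split by linarith
qed

lemma integral_Icc_add_multiple_of_period:
  fixes f :: "real \<Rightarrow> real"
  assumes "continuous_on UNIV f" "\<And>y. f (y + p) = f y" "0 \<le> p" "0 \<le> \<beta>"
  shows "integral {0..\<beta> + real n * p} f = real n * integral {0..p} f + integral {0..\<beta>} f"
proof (induction n)
  case 0
  then show ?case by simp
next
  case (Suc n)
  define \<gamma> where "\<gamma> = \<beta> + real n * p"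
  have "0 \<le> \<gamma>" using assms by (simp add: \<gamma>_def)
  have "f integrable_on {0..\<gamma> + p}"
    using assms(1) by (rule integrable_continuous_interval[OF continuous_on_subset]) simp
  have "integral {0..\<beta> + real (Suc n) * p} f = integral {0..\<gamma> + p} f"
    by (simp add: \<gamma>_def algebra_simps)
  also have "\<dots> = integral {0..p} f + integral {p..\<gamma> + p} f"
    using \<open>f integrable_on {0..\<gamma> + p}\<close> \<open>0 \<le> \<gamma>\<close> assms(3)
    by (intro Henstock_Kurzweil_Integration.integral_combine[symmetric]) simp_all
  also have "integral {p..\<gamma> + p} f = integral {0..\<gamma>} (f \<circ> (+) p)"
    using integral_shift_Icc_real[of 0 \<gamma> f p] by (simp add: add.commute)
  also have "f \<circ> (+) p = f"
    using assms(2) by (simp add: fun_eq_iff add.commute)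
  also have "integral {0..\<gamma>} f = real n * integral {0..p} f + integral {0..\<beta>} f"
    using Suc.IH by (simp add: \<gamma>_def)
  finally show ?case
    by (simp add: algebra_simps)
qed

lemma nonneg_eq_remainder_add_multiple:
  fixes \<beta> p :: real
  assumes "0 \<le> \<beta>" "0 < p"
  obtains n :: nat and \<beta>' where "0 \<le> \<beta>'" "\<beta>' < p" "\<beta> = \<beta>' + real n * p"
proof -
  define k where "k = \<lfloor>\<beta> / p\<rfloor>"
  have "0 \<le> k" using assms by (simp add: k_def)
  have "of_int k * p \<le> \<beta>" "\<beta> < (of_int k + 1) * p"
    using floor_divide_lower[OF assms(2)] floor_divide_upper[OF assms(2)] by (simp_all add: k_def)
  then show ?thesis
    using \<open>0 \<le> k\<close> by (intro that[of "\<beta> - real (nat k) * p" "nat k"]) (simp_all add: algebra_simps)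
qed

lemma F_add_multiple_of_pi:
  assumes "0 \<le> \<beta>"
  shows "F r (\<beta> + real n * pi) = real n * F r pi + F r \<beta>"
proof -
  have "F_integrand r (y + pi) = F_integrand r y" for y
    by (simp add: F_integrand_def sin_add)
  then show ?thesis
    unfolding F_eq_integral_F_integrand using assms
    by (intro integral_Icc_add_multiple_of_period continuous_on_F_integrand) auto
qed

lemma F_nonneg:
  assumes "0 \<le> \<beta>"
  shows "0 \<le> F r \<beta>"
proof -
  obtain n \<beta>' where \<beta>': "0 \<le> \<beta>'" "\<beta>' < pi" "\<beta> = \<beta>' + real n * pi"
    using nonneg_eq_remainder_add_multiple[OF assms pi_gt_zero] .
  then show ?thesis
    using F_add_multiple_of_pi[of \<beta>' r n] F_nonneg_upto_pi[of pi r] F_nonneg_upto_pi[of \<beta>' r]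
    by simp
qed

lemma F_pos:
  assumes "0 < r" "0 < \<beta>"
  shows "0 < F r \<beta>"
proof -
  obtain n \<beta>' where \<beta>': "0 \<le> \<beta>'" "\<beta>' < pi" "\<beta> = \<beta>' + real n * pi"
    using nonneg_eq_remainder_add_multiple[OF less_imp_le[OF assms(2)] pi_gt_zero] .
  have F_\<beta>: "F r \<beta> = real n * F r pi + F r \<beta>'"
    using F_add_multiple_of_pi[OF \<beta>'(1)] \<beta>'(3) by simp
  have "0 < F r pi" "0 \<le> F r \<beta>'"
    using F_pos_upto_pi[OF assms(1) pi_gt_zero] F_nonneg_upto_pi \<beta>' by auto
  show ?thesis
  proof (cases n)
    case 0
    then show ?thesis using F_\<beta> \<beta>' assms F_pos_upto_pi[of r \<beta>'] by simp
  next
    case (Suc m)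
    then have "0 < real n * F r pi" using \<open>0 < F r pi\<close> by simp
    then show ?thesis using F_\<beta> \<open>0 \<le> F r \<beta>'\<close> by linarith
  qed
qed

theorem lemma1:
  shows "\<exists>r0 > 0. (\<forall>r. 0 \<le> r \<and> r \<le> r0 \<longrightarrow> (\<forall>\<beta> \<ge> 0. F r \<beta> \<ge> 0))
              \<and> (\<forall>r. 0 < r \<and> r \<le> r0 \<longrightarrow> (\<forall>\<beta> \<ge> 0. F r \<beta> = 0 \<longleftrightarrow> \<beta> = 0))"
proof -
  have "F r \<beta> = 0 \<longleftrightarrow> \<beta> = 0" if "0 < r" "0 \<le> \<beta>" for r \<beta>
  proof (cases "\<beta> = 0")
    case True
    then show ?thesis by (simp add: F_def)
  next
    case False
    then show ?thesis using F_pos[OF \<open>0 < r\<close>, of \<beta>] that by simp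
  qed
  then show ?thesis
    using F_nonneg by (intro exI[of _ 1]) simp
qed

end
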